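(* Let $|\psi\rangle\in(\mathbb{C}^2)^{\otimes3}$ be the 3-qubit ring graph state, i.e. the (up to phase) unique state with $A_i|\psi\rangle=|\psi\rangle$ for $i=1,2,3$, where $A_i=Z_{i-1}X_iZ_{i+1}$ with indices taken cyclically ($Z_0=Z_3$, $Z_4=Z_1$). Fix $a\in(0,1/2)$ and let $h=h_1\otimes h_2\otimes h_3$ with $h_1=h_3=(\tfrac12\mathbb{1}+aZ)^{1/2}$ and $h_2=(\tfrac12\mathbb{1}+aX)^{1/2}$ (positive square roots), so that $h^\dagger h=(\tfrac12\mathbb{1}+aZ)\otimes(\tfrac12\mathbb{1}+aX)\otimes(\tfrac12\mathbb{1}+aZ)$. Then $|\psi\rangle$ can be transformed into the normalized state $h|\psi\rangle/\|h|\psi\rangle\|$ by a SEP map, but not by any $\mathrm{SEP}_1$ map.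
   Context: $X,Z$ are the Pauli matrices and $X_i,Z_i$ denote them acting on qubit $i$ (identity elsewhere). A CPTP map on $\mathcal{B}((\mathbb{C}^2)^{\otimes3})$ is in SEP if it admits a Kraus decomposition $\Lambda(\rho)=\sum_iK_i\rho K_i^\dagger$, $\sum_iK_i^\dagger K_i=\mathbb{1}$, with all Kraus operators of product form $K_i=K_i^{(1)}\otimes K_i^{(2)}\otimes K_i^{(3)}$, $K_i^{(j)}\in M(2,\mathbb{C})$; it is in $\mathrm{SEP}_1$ if such a decomposition exists with all $K_i^{(j)}\in GL(2,\mathbb{C})$. A transformation of $|\alpha\rangle$ into $|\beta\rangle$ means $\Lambda(|\alpha\rangle\langle\alpha|)=|\beta\rangle\langle\beta|$. *)

theory Defs
  imports "HOL-Analysis.Analysis"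
begin

text \<open>Single-qubit Hilbert space C^2 is indexed by bool (False = |0>, True = |1>);
  the 3-qubit space (C^2)^{tensor 3} is indexed by bool \<times> bool \<times> bool
  (first, second, third qubit).\<close>

type_synonym mat2 = "complex ^ bool ^ bool"
type_synonym idx3 = "bool \<times> bool \<times> bool"
type_synonym vec8 = "complex ^ idx3"
type_synonym mat8 = "complex ^ idx3 ^ idx3"

definition dagger :: "complex ^ 'n ^ 'm \<Rightarrow> complex ^ 'm ^ 'n" where
  "dagger A = (\<chi> i j. cnj (A $ j $ i))"

definition tensor3 :: "mat2 \<Rightarrow> mat2 \<Rightarrow> mat2 \<Rightarrow> mat8" where
  "tensor3 A B C = (\<chi> i j. A $ fst i $ fst j * B $ fst (snd i) $ fst (snd j)
                           * C $ snd (snd i) $ snd (snd j))"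

definition pauliX :: mat2 where
  "pauliX = (\<chi> i j. if i \<noteq> j then 1 else 0)"

definition pauliZ :: mat2 where
  "pauliZ = (\<chi> i j. if i = j then (if i then -1 else 1) else 0)"

definition on_qubit :: "nat \<Rightarrow> mat2 \<Rightarrow> mat8" where
  "on_qubit k P = (if k = 1 then tensor3 P (mat 1) (mat 1)
                   else if k = 2 then tensor3 (mat 1) P (mat 1)
                   else tensor3 (mat 1) (mat 1) P)"

definition stabA :: "nat \<Rightarrow> mat8" where
  "stabA i = (let prev = (if i = 1 then 3 else i - 1); next = (if i = 3 then 1 else i + 1)
              in on_qubit prev pauliZ ** on_qubit i pauliX ** on_qubit next pauliZ)"

definition proj :: "vec8 \<Rightarrow> mat8" where
  "proj a = (\<chi> i j. a $ i * cnj (a $ j))"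

definition hermitian :: "complex ^ 'n ^ 'n \<Rightarrow> bool" where
  "hermitian A \<longleftrightarrow> dagger A = A"

definition psd :: "complex ^ 'n ^ 'n \<Rightarrow> bool" where
  "psd A \<longleftrightarrow> hermitian A \<and> (\<forall>v. 0 \<le> Re (\<Sum>i\<in>UNIV. cnj (v $ i) * (A *v v) $ i))"

definition kraus_map :: "(mat2 \<times> mat2 \<times> mat2) list \<Rightarrow> mat8 \<Rightarrow> mat8" where
  "kraus_map Ks \<rho> = sum_list (map (\<lambda>(A, B, C). tensor3 A B C ** \<rho> ** dagger (tensor3 A B C)) Ks)"

definition kraus_complete :: "(mat2 \<times> mat2 \<times> mat2) list \<Rightarrow> bool" where
  "kraus_complete Ks \<longleftrightarrow>
     sum_list (map (\<lambda>(A, B, C). dagger (tensor3 A B C) ** tensor3 A B C) Ks) = mat 1"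

definition SEP :: "(mat8 \<Rightarrow> mat8) \<Rightarrow> bool" where
  "SEP \<Lambda> \<longleftrightarrow> (\<exists>Ks. kraus_complete Ks \<and> \<Lambda> = kraus_map Ks)"

definition SEP1 :: "(mat8 \<Rightarrow> mat8) \<Rightarrow> bool" where
  "SEP1 \<Lambda> \<longleftrightarrow> (\<exists>Ks. kraus_complete Ks \<and> \<Lambda> = kraus_map Ks \<and>
     (\<forall>(A, B, C) \<in> set Ks. invertible A \<and> invertible B \<and> invertible C))"

definition transforms :: "(mat8 \<Rightarrow> mat8) \<Rightarrow> vec8 \<Rightarrow> vec8 \<Rightarrow> bool" where
  "transforms \<Lambda> \<alpha> \<beta> \<longleftrightarrow> \<Lambda> (proj \<alpha>) = proj \<beta>"

end

(*
  SEP: summing dagger S ** (dagger h ** h) ** S, where dagger h ** h = (1/2 + aZ) (1/2 + aX) (1/2 + aZ),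
  over the stabilisers S = 1, A1 A2 = Y Y 1, A2 A3 = 1 Y Y and A1 A3 = Y 1 Y of psi gives
  1/2 + 4a^3 A2. Hence the product operators k h S for these
  S, with k^2 = 2/(1 + 8a^3), together with l = sqrt(8a^3) k times product projectors onto the -1
  eigenspace of A2, form a complete Kraus family; the former send psi to k h psi, the latter
  annihilate psi, so the output is 4k^2 |h psi><h psi| = |h psi><h psi| / ||h psi||^2.

  Not SEP1: in the eigenbasis of Pauli Y on every qubit, psi is a GHZ-type state, and the invertible
  local operators fixing the direction of such a state are diagonal or antidiagonal; hence they also
  fix psi' = Z Z Z psi up to a sign. An invertible product Kraus operator K must send psi into the
  direction of h psi, so K = h G with such a G, and ||K psi'||^2 / ||K psi||^2 equals
  ||h psi'||^2 / ||h psi||^2 = (1 - 8a^3) / (1 + 8a^3). Summing over a complete Kraus family makes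
  both numerator and denominator sums equal to 1, which is impossible for a > 0.
*)
theory Submission
  imports Defs
begin

lemma UNIV_idx3:
  "(UNIV :: idx3 set) = {(False,False,False), (False,False,True), (False,True,False), (False,True,True),
     (True,False,False), (True,False,True), (True,True,False), (True,True,True)}"
  by auto

lemma sum_idx3:
  "(\<Sum>j\<in>(UNIV :: idx3 set). f j) = f (False,False,False) + f (False,False,True) + f (False,True,False)
     + f (False,True,True) + f (True,False,False) + f (True,False,True) + f (True,True,False) + f (True,True,True)"
  by (simp add: UNIV_idx3 algebra_simps)

lemma sum_bool: "(\<Sum>j\<in>(UNIV :: bool set). f j) = f False + f True"
  by (simp add: UNIV_bool)

lemma matrix_add_rdistrib: "(A + B) ** C = A ** C + B ** C"
  by (vector matrix_matrix_mult_def sum.distrib[symmetric] field_simps)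

lemma scaleR_eq_smult: "r *\<^sub>R (v :: complex ^ 'n) = of_real r *s v"
  by (simp add: vec_eq_iff) (simp add: scaleR_conv_of_real)

lemma scaleR_smult_commute: "r *\<^sub>R (c *s v) = c *s (r *\<^sub>R v :: complex ^ 'n)"
  by (simp add: scaleR_eq_smult mult.commute)

lemma scaleR_matrix_vector_mult: "(r *\<^sub>R A) *v v = r *\<^sub>R (A *v v :: complex ^ 'n)"
  unfolding matrix_vector_mult_def by (simp add: vec_eq_iff scaleR_sum_right)

lemma sum_list_map_scaleR:
  fixes f :: "'a \<Rightarrow> 'b::real_vector"
  shows "sum_list (map (\<lambda>x. r *\<^sub>R f x) xs) = r *\<^sub>R sum_list (map f xs)"
  by (induction xs) (simp_all add: scaleR_add_right)

lemma invertible_of_square: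
  fixes h :: "'a::field ^ 'n ^ 'n"
  assumes "invertible (h ** h)"
  shows "invertible h"
  using assms by (simp add: invertible_det_nz det_mul)

lemma invertible_half_id_plus_involution:
  fixes P :: "complex ^ 'n ^ 'n"
  assumes P: "P ** P = mat 1" and a: "a\<^sup>2 \<noteq> 1/4"
  shows "invertible ((1/2) *\<^sub>R mat 1 + a *\<^sub>R P)"
proof -
  let ?M = "(1/2) *\<^sub>R mat 1 + (- a) *\<^sub>R P"
  have "((1/2) *\<^sub>R mat 1 + a *\<^sub>R P) ** ?M = (1/4 - a\<^sup>2) *\<^sub>R (mat 1 :: complex ^ 'n ^ 'n)"
    by (simp only: matrix_add_ldistrib matrix_add_rdistrib matrix_scalar_ac scalar_matrix_assoc[symmetric]
        P matrix_mul_lid matrix_mul_rid) (simp add: algebra_simps power2_eq_square)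
  then have "((1/2) *\<^sub>R mat 1 + a *\<^sub>R P) ** (inverse (1/4 - a\<^sup>2) *\<^sub>R ?M) = mat 1"
    using a by (simp add: matrix_scalar_ac scalar_matrix_assoc[symmetric])
  then show ?thesis
    using invertible_right_inverse by blast
qed

lemma invertible_sqrt_half_id_plus_involution:
  fixes h P :: "complex ^ 'n ^ 'n"
  assumes "h ** h = (1/2) *\<^sub>R mat 1 + a *\<^sub>R P" "P ** P = mat 1" "\<bar>a\<bar> < 1/2"
  shows "invertible h"
proof -
  have "\<bar>a\<bar> * \<bar>a\<bar> < 1/2 * (1/2)"
    using assms(3) by (intro mult_strict_mono) auto
  then have "a\<^sup>2 \<noteq> 1/4"
    by (simp add: power2_eq_square)
  then show ?thesis
    using assms(1,2) invertible_half_id_plus_involution invertible_of_square by metis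
qed

lemma dagger_mult: "dagger (A ** B) = dagger B ** dagger A"
  unfolding dagger_def matrix_matrix_mult_def by (simp add: vec_eq_iff mult.commute)

lemma dagger_dagger [simp]: "dagger (dagger A) = A"
  unfolding dagger_def by (simp add: vec_eq_iff)

lemma dagger_scaleR: "dagger (r *\<^sub>R A) = r *\<^sub>R dagger A"
  unfolding dagger_def by (simp add: vec_eq_iff)

lemma dagger_mat_1: "dagger (mat 1) = (mat 1 :: complex ^ 'n ^ 'n)"
  unfolding dagger_def mat_def by (simp add: vec_eq_iff)

lemma gram_scaleR: "dagger (r *\<^sub>R K) ** (r *\<^sub>R K) = r\<^sup>2 *\<^sub>R (dagger K ** K)"
  by (simp add: dagger_scaleR matrix_scalar_ac scalar_matrix_assoc[symmetric] power2_eq_square)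

lemma tensor3_mult: "tensor3 A B C ** tensor3 A' B' C' = tensor3 (A ** A') (B ** B') (C ** C')"
  unfolding tensor3_def matrix_matrix_mult_def
  by (simp add: vec_eq_iff sum_idx3 sum_bool algebra_simps)

lemma tensor3_mat_1: "tensor3 (mat 1) (mat 1) (mat 1) = mat 1"
  by (simp add: tensor3_def mat_def vec_eq_iff)

lemma tensor3_scaleR_left: "tensor3 (r *\<^sub>R A) B C = r *\<^sub>R tensor3 A B C"
  unfolding tensor3_def by (simp add: vec_eq_iff)

lemma invertible_tensor3:
  assumes "invertible A" "invertible B" "invertible C"
  shows "invertible (tensor3 A B C)"
proof -
  obtain A' B' C' where "A' ** A = mat 1" "B' ** B = mat 1" "C' ** C = mat 1"
    using assms invertible_left_inverse by metis
  then have "tensor3 A' B' C' ** tensor3 A B C = mat 1"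
    by (simp add: tensor3_mult tensor3_mat_1)
  then show ?thesis
    using invertible_left_inverse by blast
qed

lemma dagger_tensor3: "dagger (tensor3 A B C) = tensor3 (dagger A) (dagger B) (dagger C)"
  unfolding tensor3_def dagger_def by (simp add: vec_eq_iff)

definition cinner :: "complex ^ 'n \<Rightarrow> complex ^ 'n \<Rightarrow> complex" where
  "cinner u w = (\<Sum>i\<in>UNIV. cnj (u $ i) * w $ i)"

lemma cinner_self: "cinner w w = of_real ((norm w)\<^sup>2)"
proof -
  have "(norm w)\<^sup>2 = (\<Sum>i\<in>UNIV. (cmod (w $ i))\<^sup>2)"
    unfolding norm_vec_def L2_set_def by (simp add: sum_nonneg)
  then have "of_real ((norm w)\<^sup>2) = (\<Sum>i\<in>UNIV. of_real ((cmod (w $ i))\<^sup>2) :: complex)"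
    by simp
  also have "\<dots> = (\<Sum>i\<in>UNIV. cnj (w $ i) * w $ i)"
    by (rule sum.cong) (simp_all only: complex_norm_square mult.commute)
  finally show ?thesis
    unfolding cinner_def by simp
qed

lemma cinner_eq_zero_iff [simp]: "cinner w w = 0 \<longleftrightarrow> w = 0"
  by (simp add: cinner_self)

lemma cinner_commute: "cinner w u = cnj (cinner u w)"
  unfolding cinner_def by (simp add: mult.commute)

lemma cinner_diff_left: "cinner (u - u') w = cinner u w - cinner u' w"
  unfolding cinner_def by (simp add: left_diff_distrib sum_subtractf)

lemma cinner_diff_right: "cinner u (w - w') = cinner u w - cinner u w'"
  unfolding cinner_def by (simp add: right_diff_distrib sum_subtractf)

lemma cinner_scale_left: "cinner (c *s u) w = cnj c * cinner u w"
  unfolding cinner_def by (simp add: sum_distrib_left algebra_simps)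

lemma cinner_scale_right: "cinner u (c *s w) = c * cinner u w"
  unfolding cinner_def by (simp add: sum_distrib_left algebra_simps)

lemma cinner_smult_self: "cinner (c *s x) (c *s x) = cnj c * c * cinner x x"
  by (simp add: cinner_scale_left cinner_scale_right mult.assoc)

lemma cinner_matrix_right: "cinner u (A *v w) = cinner (dagger A *v u) w"
proof -
  have "cinner u (A *v w) = (\<Sum>i\<in>UNIV. \<Sum>j\<in>UNIV. cnj (u $ i) * A $ i $ j * w $ j)"
    unfolding cinner_def matrix_vector_mult_def by (simp add: sum_distrib_left mult.assoc)
  also have "\<dots> = (\<Sum>j\<in>UNIV. \<Sum>i\<in>UNIV. cnj (u $ i) * A $ i $ j * w $ j)"
    by (rule sum.swap)
  also have "\<dots> = cinner (dagger A *v u) w"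
    unfolding cinner_def matrix_vector_mult_def dagger_def
    by (simp add: sum_distrib_left sum_distrib_right mult_ac)
  finally show ?thesis .
qed

lemma cinner_sum_list_matrix:
  "cinner v (sum_list (map f xs) *v v) = sum_list (map (\<lambda>x. cinner v (f x *v v)) xs)"
  by (induction xs)
    (simp_all add: matrix_vector_mult_add_rdistrib cinner_def sum.distrib distrib_left)

lemma cinner_dagger_mult_self: "cinner v ((dagger K ** K) *v v) = cinner (K *v v) (K *v v)"
  by (simp add: cinner_matrix_right matrix_vector_mul_assoc[symmetric] dagger_mult)

lemma proj_mult_vec: "proj w *v v = cinner w v *s w"
  unfolding proj_def matrix_vector_mult_def cinner_def
  by (simp add: vec_eq_iff sum_distrib_left mult_ac)

lemma cinner_proj: "cinner v (proj w *v v) = of_real ((cmod (cinner v w))\<^sup>2)"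
  unfolding proj_mult_vec cinner_scale_right cinner_commute[of w v] complex_norm_square
  by (simp add: mult.commute)

lemma proj_zero: "proj 0 = 0"
  unfolding proj_def by (simp add: vec_eq_iff)

lemma proj_scaleR: "proj (r *\<^sub>R v) = r\<^sup>2 *\<^sub>R proj v"
  unfolding proj_def by (simp add: vec_eq_iff) (simp add: scaleR_conv_of_real power2_eq_square mult_ac)

lemma proj_conj: "K ** proj w ** dagger K = proj (K *v w)"
proof -
  have "(K ** proj w ** dagger K) $ i $ j = (K *v w) $ i * cnj ((K *v w) $ j)" for i j
  proof -
    have "(K ** proj w ** dagger K) $ i $ j
        = (\<Sum>k\<in>UNIV. \<Sum>l\<in>UNIV. (K $ i $ l * w $ l) * (cnj (K $ j $ k) * cnj (w $ k)))"
      unfolding proj_def dagger_def matrix_matrix_mult_def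
      by (simp add: sum_distrib_left sum_distrib_right mult_ac)
    also have "\<dots> = (\<Sum>l\<in>UNIV. K $ i $ l * w $ l) * (\<Sum>k\<in>UNIV. cnj (K $ j $ k) * cnj (w $ k))"
      by (subst sum.swap) (simp only: sum_product)
    finally show ?thesis
      unfolding matrix_vector_mult_def by simp
  qed
  then show ?thesis
    unfolding proj_def by (simp add: vec_eq_iff)
qed

lemma sum_proj_eq_proj_imp_parallel:
  assumes sum: "sum_list (map proj ws) = proj \<beta>" and unit: "cinner \<beta> \<beta> = 1" and w: "w \<in> set ws"
  shows "w = cinner \<beta> w *s \<beta>"
proof -
  define v where "v = w - cinner \<beta> w *s \<beta>"
  have v_orth: "cinner v \<beta> = 0"
    unfolding v_def by (simp add: cinner_diff_left cinner_scale_left unit cinner_commute[of w \<beta>])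
  have "of_real (sum_list (map (\<lambda>u. (cmod (cinner v u))\<^sup>2) ws)) = cinner v (proj \<beta> *v v)"
    unfolding sum[symmetric] cinner_sum_list_matrix cinner_proj by (induction ws) simp_all
  then have "sum_list (map (\<lambda>u. (cmod (cinner v u))\<^sup>2) ws) = 0"
    by (simp add: cinner_proj v_orth)
  then have "\<forall>u\<in>set ws. (cmod (cinner v u))\<^sup>2 = 0"
    by (subst (asm) sum_list_nonneg_eq_0_iff) auto
  then have "cinner v w = 0"
    using w by simp
  then have "cinner v v = 0"
    by (subst (2) v_def) (simp add: cinner_diff_right cinner_scale_right v_orth)
  then show ?thesis
    unfolding v_def by simp
qed

lemma kraus_map_proj:
  "kraus_map Ks (proj \<psi>) = sum_list (map proj (map (\<lambda>(A, B, C). tensor3 A B C *v \<psi>) Ks))"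
  unfolding kraus_map_def by (simp add: proj_conj split_def comp_def)

lemma kraus_complete_sum_norms:
  assumes "kraus_complete Ks"
  shows "sum_list (map (\<lambda>(A, B, C). cinner (tensor3 A B C *v v) (tensor3 A B C *v v)) Ks) = cinner v v"
proof -
  have "cinner v v = cinner v (mat 1 *v v)"
    by simp
  also have "\<dots> = cinner v (sum_list (map (\<lambda>(A, B, C). dagger (tensor3 A B C) ** tensor3 A B C) Ks) *v v)"
    using assms unfolding kraus_complete_def by simp
  also have "\<dots> = sum_list (map (\<lambda>(A, B, C). cinner (tensor3 A B C *v v) (tensor3 A B C *v v)) Ks)"
    unfolding cinner_sum_list_matrix by (simp add: cinner_dagger_mult_self split_def)
  finally show ?thesis ..
qed

lemma kraus_complete_norm_ratio:
  assumes complete: "kraus_complete Ks"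
    and ratio: "\<And>A B C. (A, B, C) \<in> set Ks \<Longrightarrow>
      cinner (tensor3 A B C *v u') (tensor3 A B C *v u') * c = cinner (tensor3 A B C *v u) (tensor3 A B C *v u) * c'"
  shows "cinner u' u' * c = cinner u u * c'"
proof -
  have "sum_list (map (\<lambda>(A, B, C). cinner (tensor3 A B C *v u') (tensor3 A B C *v u')) Ks) * c
      = sum_list (map (\<lambda>(A, B, C). cinner (tensor3 A B C *v u) (tensor3 A B C *v u)) Ks) * c'"
    unfolding sum_list_mult_const[symmetric] by (rule arg_cong[where f = sum_list], rule map_cong) (auto simp: ratio)
  then show ?thesis
    unfolding kraus_complete_sum_norms[OF complete] .
qed

lemma kraus_output_parallel:
  assumes out: "kraus_map Ks (proj \<psi>) = proj (inverse (norm w) *\<^sub>R w)" and "w \<noteq> 0"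
    and "(A, B, C) \<in> set Ks"
  shows "\<exists>c. tensor3 A B C *v \<psi> = c *s w"
proof -
  let ?\<beta> = "inverse (norm w) *\<^sub>R w"
  have "cinner ?\<beta> ?\<beta> = 1"
    using \<open>w \<noteq> 0\<close> unfolding cinner_self by simp
  then have "tensor3 A B C *v \<psi> = cinner ?\<beta> (tensor3 A B C *v \<psi>) *s ?\<beta>"
    using sum_proj_eq_proj_imp_parallel[OF out[unfolded kraus_map_proj]] assms(3) by force
  then show ?thesis
    unfolding scaleR_eq_smult vector_smult_assoc by blast
qed

definition mk_mat2 :: "complex \<Rightarrow> complex \<Rightarrow> complex \<Rightarrow> complex \<Rightarrow> mat2" where
  "mk_mat2 a b c d = (\<chi> i j. if i then (if j then d else c) else (if j then b else a))"

definition mk_vec2 :: "complex \<Rightarrow> complex \<Rightarrow> complex ^ bool" where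
  "mk_vec2 x y = (\<chi> i. if i then y else x)"

definition mk_vec8 :: "complex \<Rightarrow> complex \<Rightarrow> complex \<Rightarrow> complex \<Rightarrow> complex \<Rightarrow> complex \<Rightarrow> complex \<Rightarrow> complex \<Rightarrow> vec8"
  where "mk_vec8 c0 c1 c2 c3 c4 c5 c6 c7 = (\<chi> x. case x of (i, j, k) \<Rightarrow>
    if i then (if j then (if k then c7 else c6) else (if k then c5 else c4))
    else (if j then (if k then c3 else c2) else (if k then c1 else c0)))"

lemma mk_mat2_nth [simp]:
  "mk_mat2 a b c d $ False $ False = a" "mk_mat2 a b c d $ False $ True = b"
  "mk_mat2 a b c d $ True $ False = c" "mk_mat2 a b c d $ True $ True = d"
  unfolding mk_mat2_def by simp_all

lemma mk_vec2_nth [simp]: "mk_vec2 x y $ False = x" "mk_vec2 x y $ True = y"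
  unfolding mk_vec2_def by simp_all

lemma mk_vec8_nth [simp]:
  "mk_vec8 c0 c1 c2 c3 c4 c5 c6 c7 $ (False,False,False) = c0"
  "mk_vec8 c0 c1 c2 c3 c4 c5 c6 c7 $ (False,False,True) = c1"
  "mk_vec8 c0 c1 c2 c3 c4 c5 c6 c7 $ (False,True,False) = c2"
  "mk_vec8 c0 c1 c2 c3 c4 c5 c6 c7 $ (False,True,True) = c3"
  "mk_vec8 c0 c1 c2 c3 c4 c5 c6 c7 $ (True,False,False) = c4"
  "mk_vec8 c0 c1 c2 c3 c4 c5 c6 c7 $ (True,False,True) = c5"
  "mk_vec8 c0 c1 c2 c3 c4 c5 c6 c7 $ (True,True,False) = c6"
  "mk_vec8 c0 c1 c2 c3 c4 c5 c6 c7 $ (True,True,True) = c7"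
  unfolding mk_vec8_def by simp_all

lemma vec2_eq_iff: "(u :: complex ^ bool) = w \<longleftrightarrow> u $ False = w $ False \<and> u $ True = w $ True"
  by (auto simp: vec_eq_iff all_bool_eq)

lemma mat2_eq_iff:
  "(A :: mat2) = B \<longleftrightarrow> A $ False $ False = B $ False $ False \<and> A $ False $ True = B $ False $ True \<and>
     A $ True $ False = B $ True $ False \<and> A $ True $ True = B $ True $ True"
  by (auto simp: vec_eq_iff all_bool_eq)

lemma vec8_eq_iff:
  "(v :: vec8) = w \<longleftrightarrow>
     v $ (False,False,False) = w $ (False,False,False) \<and> v $ (False,False,True) = w $ (False,False,True) \<and>
     v $ (False,True,False) = w $ (False,True,False) \<and> v $ (False,True,True) = w $ (False,True,True) \<and>
     v $ (True,False,False) = w $ (True,False,False) \<and> v $ (True,False,True) = w $ (True,False,True) \<and>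
     v $ (True,True,False) = w $ (True,True,False) \<and> v $ (True,True,True) = w $ (True,True,True)"
  unfolding vec_eq_iff split_paired_All all_bool_eq by blast

lemma mat8_eq_iff: "(A :: mat8) = B \<longleftrightarrow> (\<forall>i j. A $ i $ j = B $ i $ j)"
  by (simp add: vec_eq_iff)

lemma mk_vec8_eq_iff:
  "mk_vec8 a0 a1 a2 a3 a4 a5 a6 a7 = mk_vec8 b0 b1 b2 b3 b4 b5 b6 b7 \<longleftrightarrow>
     a0 = b0 \<and> a1 = b1 \<and> a2 = b2 \<and> a3 = b3 \<and> a4 = b4 \<and> a5 = b5 \<and> a6 = b6 \<and> a7 = b7"
  by (simp only: vec8_eq_iff mk_vec8_nth)

lemma vec8_cases:
  obtains c0 c1 c2 c3 c4 c5 c6 c7 where "(v :: vec8) = mk_vec8 c0 c1 c2 c3 c4 c5 c6 c7"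
  by (metis vec8_eq_iff mk_vec8_nth)

lemma mat2_eq_mk_mat2: "(M :: mat2) = mk_mat2 (M $ False $ False) (M $ False $ True) (M $ True $ False) (M $ True $ True)"
  by (simp add: mat2_eq_iff)

lemma mk_mat2_mult:
  "mk_mat2 a b c d ** mk_mat2 a' b' c' d' = mk_mat2 (a*a' + b*c') (a*b' + b*d') (c*a' + d*c') (c*b' + d*d')"
  by (simp add: mat2_eq_iff matrix_matrix_mult_def sum_bool)

lemma dagger_mk_mat2: "dagger (mk_mat2 a b c d) = mk_mat2 (cnj a) (cnj c) (cnj b) (cnj d)"
  by (simp add: mat2_eq_iff dagger_def)

lemma mk_mat2_mult_vec: "mk_mat2 a b c d *v mk_vec2 x y = mk_vec2 (a*x + b*y) (c*x + d*y)"
  by (simp add: vec2_eq_iff matrix_vector_mult_def sum_bool)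

lemma mat_1_eq_mk_mat2: "(mat 1 :: mat2) = mk_mat2 1 0 0 1"
  by (simp add: mat2_eq_iff mat_def)

lemma pauliX_eq_mk_mat2: "pauliX = mk_mat2 0 1 1 0"
  by (simp add: mat2_eq_iff pauliX_def)

lemma pauliZ_eq_mk_mat2: "pauliZ = mk_mat2 1 0 0 (-1)"
  by (simp add: mat2_eq_iff pauliZ_def)

lemma pauliX_squared: "pauliX ** pauliX = mat 1"
  by (simp add: pauliX_eq_mk_mat2 mat_1_eq_mk_mat2 mk_mat2_mult)

lemma pauliZ_squared: "pauliZ ** pauliZ = mat 1"
  by (simp add: pauliZ_eq_mk_mat2 mat_1_eq_mk_mat2 mk_mat2_mult)

lemma half_id_plus_pauliZ: "(1/2) *\<^sub>R mat 1 + a *\<^sub>R pauliZ = mk_mat2 (1/2 + of_real a) 0 0 (1/2 - of_real a)"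
  by (simp add: mat2_eq_iff mat_def pauliZ_def) (simp add: scaleR_conv_of_real)

lemma half_id_plus_pauliX: "(1/2) *\<^sub>R mat 1 + a *\<^sub>R pauliX = mk_mat2 (1/2) (of_real a) (of_real a) (1/2)"
  by (simp add: mat2_eq_iff mat_def pauliX_def) (simp add: scaleR_conv_of_real)

lemma tensor3_nth: "tensor3 A B C $ (i1, i2, i3) $ (j1, j2, j3) = A $ i1 $ j1 * B $ i2 $ j2 * C $ i3 $ j3"
  by (simp add: tensor3_def)

lemma tensor3_mult_mk_vec8:
  "tensor3 (mk_mat2 a1 b1 c1 d1) (mk_mat2 a2 b2 c2 d2) (mk_mat2 a3 b3 c3 d3) *v mk_vec8 x0 x1 x2 x3 x4 x5 x6 x7 = mk_vec8
  (a1*a2*a3*x0 + a1*a2*b3*x1 + a1*b2*a3*x2 + a1*b2*b3*x3 + b1*a2*a3*x4 + b1*a2*b3*x5 + b1*b2*a3*x6 + b1*b2*b3*x7)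
  (a1*a2*c3*x0 + a1*a2*d3*x1 + a1*b2*c3*x2 + a1*b2*d3*x3 + b1*a2*c3*x4 + b1*a2*d3*x5 + b1*b2*c3*x6 + b1*b2*d3*x7)
  (a1*c2*a3*x0 + a1*c2*b3*x1 + a1*d2*a3*x2 + a1*d2*b3*x3 + b1*c2*a3*x4 + b1*c2*b3*x5 + b1*d2*a3*x6 + b1*d2*b3*x7)
  (a1*c2*c3*x0 + a1*c2*d3*x1 + a1*d2*c3*x2 + a1*d2*d3*x3 + b1*c2*c3*x4 + b1*c2*d3*x5 + b1*d2*c3*x6 + b1*d2*d3*x7)
  (c1*a2*a3*x0 + c1*a2*b3*x1 + c1*b2*a3*x2 + c1*b2*b3*x3 + d1*a2*a3*x4 + d1*a2*b3*x5 + d1*b2*a3*x6 + d1*b2*b3*x7)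
  (c1*a2*c3*x0 + c1*a2*d3*x1 + c1*b2*c3*x2 + c1*b2*d3*x3 + d1*a2*c3*x4 + d1*a2*d3*x5 + d1*b2*c3*x6 + d1*b2*d3*x7)
  (c1*c2*a3*x0 + c1*c2*b3*x1 + c1*d2*a3*x2 + c1*d2*b3*x3 + d1*c2*a3*x4 + d1*c2*b3*x5 + d1*d2*a3*x6 + d1*d2*b3*x7)
  (c1*c2*c3*x0 + c1*c2*d3*x1 + c1*d2*c3*x2 + c1*d2*d3*x3 + d1*c2*c3*x4 + d1*c2*d3*x5 + d1*d2*c3*x6 + d1*d2*d3*x7)"
  unfolding matrix_vector_mult_def by (simp add: vec8_eq_iff tensor3_def sum_idx3)

section \<open>The ring graph state\<close>

lemma stabA_eq_tensor3:
  "stabA 1 = tensor3 pauliX pauliZ pauliZ" "stabA 2 = tensor3 pauliZ pauliX pauliZ"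
  "stabA 3 = tensor3 pauliZ pauliZ pauliX"
  unfolding stabA_def on_qubit_def by (simp_all add: tensor3_mult)

definition ring_vec :: vec8 where
  "ring_vec = mk_vec8 1 1 1 (-1) 1 (-1) (-1) (-1)"

definition ring_vec_flip :: vec8 where
  "ring_vec_flip = tensor3 pauliZ pauliZ pauliZ *v ring_vec"

lemma ring_vec_flip_eq: "ring_vec_flip = mk_vec8 1 (-1) (-1) (-1) (-1) (-1) (-1) 1"
  unfolding ring_vec_flip_def ring_vec_def pauliZ_eq_mk_mat2 tensor3_mult_mk_vec8 by simp

lemma stabA_mult_mk_vec8:
  "stabA 1 *v mk_vec8 x0 x1 x2 x3 x4 x5 x6 x7 = mk_vec8 x4 (-x5) (-x6) x7 x0 (-x1) (-x2) x3"
  "stabA 2 *v mk_vec8 x0 x1 x2 x3 x4 x5 x6 x7 = mk_vec8 x2 (-x3) x0 (-x1) (-x6) x7 (-x4) x5"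
  "stabA 3 *v mk_vec8 x0 x1 x2 x3 x4 x5 x6 x7 = mk_vec8 x1 x0 (-x3) (-x2) (-x5) (-x4) x7 x6"
  unfolding stabA_eq_tensor3 pauliX_eq_mk_mat2 pauliZ_eq_mk_mat2 tensor3_mult_mk_vec8 by simp_all

lemma stabilised_eq_ring_vec:
  assumes "\<forall>i\<in>{1,2,3}. stabA i *v \<psi> = \<psi>"
  shows "\<psi> = \<psi> $ (False,False,False) *s ring_vec"
proof -
  obtain x0 x1 x2 x3 x4 x5 x6 x7 where \<psi>: "\<psi> = mk_vec8 x0 x1 x2 x3 x4 x5 x6 x7"
    by (rule vec8_cases)
  have "stabA 1 *v \<psi> = \<psi>" "stabA 2 *v \<psi> = \<psi>" "stabA 3 *v \<psi> = \<psi>"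
    using assms by simp_all
  then have "x4 = x0" "-x5 = x1" "-x6 = x2" "x7 = x3" "x2 = x0" "x1 = x0" "-x3 = x2"
    unfolding \<psi> stabA_mult_mk_vec8 mk_vec8_eq_iff by blast+
  then have "x1 = x0" "x2 = x0" "x3 = -x0" "x4 = x0" "x5 = -x0" "x6 = -x0" "x7 = -x0"
    by (metis minus_minus)+
  then show ?thesis
    unfolding \<psi> ring_vec_def by (simp add: vec8_eq_iff)
qed

definition filter_gram :: "real \<Rightarrow> mat8" where
  "filter_gram a = tensor3 ((1/2) *\<^sub>R mat 1 + a *\<^sub>R pauliZ) ((1/2) *\<^sub>R mat 1 + a *\<^sub>R pauliX)
     ((1/2) *\<^sub>R mat 1 + a *\<^sub>R pauliZ)"

lemma dagger_filter_mult_self: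
  assumes "hermitian h1" "hermitian h2" "hermitian h3"
    and "h1 ** h1 = (1/2) *\<^sub>R mat 1 + a *\<^sub>R pauliZ" "h2 ** h2 = (1/2) *\<^sub>R mat 1 + a *\<^sub>R pauliX"
      "h3 ** h3 = (1/2) *\<^sub>R mat 1 + a *\<^sub>R pauliZ"
  shows "dagger (tensor3 h1 h2 h3) ** tensor3 h1 h2 h3 = filter_gram a"
  using assms unfolding filter_gram_def hermitian_def by (simp add: dagger_tensor3 tensor3_mult)

lemma cinner_ring_vec_filter_gram: "cinner ring_vec (filter_gram a *v ring_vec) = 1 + 8 * of_real a ^ 3"
  unfolding cinner_def ring_vec_def filter_gram_def half_id_plus_pauliZ half_id_plus_pauliX tensor3_mult_mk_vec8
  by (simp add: sum_idx3 algebra_simps power3_eq_cube)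

lemma cinner_ring_vec_flip_filter_gram: "cinner ring_vec_flip (filter_gram a *v ring_vec_flip) = 1 - 8 * of_real a ^ 3"
  unfolding cinner_def ring_vec_flip_eq filter_gram_def half_id_plus_pauliZ half_id_plus_pauliX tensor3_mult_mk_vec8
  by (simp add: sum_idx3 algebra_simps power3_eq_cube)

lemma cinner_ring_vec_self: "cinner ring_vec ring_vec = 8" "cinner ring_vec_flip ring_vec_flip = 8"
  unfolding cinner_def ring_vec_def ring_vec_flip_eq by (simp_all add: sum_idx3)

section \<open>Local symmetries of the ring graph state\<close>

definition y_plus :: "complex ^ bool" where "y_plus = mk_vec2 1 \<i>"

definition y_minus :: "complex ^ bool" where "y_minus = mk_vec2 1 (-\<i>)"

definition y_plus_dual :: "complex ^ bool" where "y_plus_dual = mk_vec2 (1/2) (-\<i>/2)"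

definition y_minus_dual :: "complex ^ bool" where "y_minus_dual = mk_vec2 (1/2) (\<i>/2)"

text \<open>Bilinear, not sesquilinear: y_plus_dual and y_minus_dual are the coordinate functionals
  of the eigenbasis y_plus, y_minus of Pauli Y.\<close>
definition dot2 :: "complex ^ bool \<Rightarrow> complex ^ bool \<Rightarrow> complex" where
  "dot2 r u = r $ False * u $ False + r $ True * u $ True"

lemma dot2_y_basis [simp]:
  "dot2 y_plus_dual y_plus = 1" "dot2 y_plus_dual y_minus = 0"
  "dot2 y_minus_dual y_plus = 0" "dot2 y_minus_dual y_minus = 1"
  unfolding dot2_def y_plus_dual_def y_minus_dual_def y_plus_def y_minus_def by (simp_all add: field_simps)

lemma dot2_lincomb: "dot2 r (a *s u + b *s w) = a * dot2 r u + b * dot2 r w"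
  unfolding dot2_def by (simp add: algebra_simps)

lemma vec2_y_basis_decomp: "u = dot2 y_plus_dual u *s y_plus + dot2 y_minus_dual u *s y_minus"
  unfolding dot2_def y_plus_dual_def y_minus_dual_def y_plus_def y_minus_def
  by (simp add: vec2_eq_iff field_simps)

lemma invertible_mat2_det_nonzero:
  assumes "invertible (G :: mat2)"
  shows "G $ False $ False * G $ True $ True - G $ False $ True * G $ True $ False \<noteq> 0"
proof
  assume det: "G $ False $ False * G $ True $ True - G $ False $ True * G $ True $ False = 0"
  obtain M where M: "M ** G = mat 1"
    using assms invertible_left_inverse by blast
  have kernel: "w = 0" if "G *v w = 0" for w
    by (metis M matrix_vector_mul_assoc matrix_vector_mul_lid matrix_vector_mult_0_right that)
  have "mk_vec2 (G $ True $ True) (- G $ True $ False) = 0" "mk_vec2 (G $ False $ True) (- G $ False $ False) = 0"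
    by (rule kernel, subst mat2_eq_mk_mat2, use det in \<open>simp add: mk_mat2_mult_vec vec2_eq_iff algebra_simps\<close>)+
  then have "G = 0"
    by (simp add: vec2_eq_iff mat2_eq_iff)
  with M have "(mat 1 :: mat2) = 0"
    by simp
  then show False
    by (simp add: mat2_eq_iff mat_def)
qed

lemma invertible_y_basis_coeffs:
  assumes "invertible (G :: mat2)"
  obtains p q u v where "G *v y_plus = p *s y_plus + q *s y_minus" "G *v y_minus = u *s y_plus + v *s y_minus"
    and "p * v - q * u \<noteq> 0"
proof
  let ?p = "dot2 y_plus_dual (G *v y_plus)" and ?q = "dot2 y_minus_dual (G *v y_plus)"
    and ?u = "dot2 y_plus_dual (G *v y_minus)" and ?v = "dot2 y_minus_dual (G *v y_minus)"
  show "G *v y_plus = ?p *s y_plus + ?q *s y_minus" "G *v y_minus = ?u *s y_plus + ?v *s y_minus"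
    by (rule vec2_y_basis_decomp)+
  have "?p * ?v - ?q * ?u = G $ False $ False * G $ True $ True - G $ False $ True * G $ True $ False"
    unfolding dot2_def y_plus_dual_def y_minus_dual_def y_plus_def y_minus_def matrix_vector_mult_def
    by (simp add: sum_bool field_simps)
  then show "?p * ?v - ?q * ?u \<noteq> 0"
    using invertible_mat2_det_nonzero[OF assms] by simp
qed

definition vtensor3 :: "complex ^ bool \<Rightarrow> complex ^ bool \<Rightarrow> complex ^ bool \<Rightarrow> vec8" where
  "vtensor3 u v w = (\<chi> x. u $ fst x * v $ fst (snd x) * w $ snd (snd x))"

definition dot8 :: "complex ^ bool \<Rightarrow> complex ^ bool \<Rightarrow> complex ^ bool \<Rightarrow> vec8 \<Rightarrow> complex" where
  "dot8 r1 r2 r3 w = (\<Sum>x\<in>UNIV. r1 $ fst x * r2 $ fst (snd x) * r3 $ snd (snd x) * w $ x)"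

lemma tensor3_mult_vtensor3: "tensor3 A B C *v vtensor3 u v w = vtensor3 (A *v u) (B *v v) (C *v w)"
  unfolding matrix_vector_mult_def vtensor3_def tensor3_def
  by (simp add: vec_eq_iff sum_idx3 sum_bool algebra_simps)

lemma dot8_vtensor3: "dot8 r1 r2 r3 (vtensor3 u v w) = dot2 r1 u * dot2 r2 v * dot2 r3 w"
  unfolding dot8_def vtensor3_def dot2_def by (simp add: sum_idx3 algebra_simps)

lemma dot8_add: "dot8 r1 r2 r3 (x + y) = dot8 r1 r2 r3 x + dot8 r1 r2 r3 y"
  unfolding dot8_def by (simp add: sum.distrib algebra_simps)

lemma dot8_scale: "dot8 r1 r2 r3 (a *s x) = a * dot8 r1 r2 r3 x"
  unfolding dot8_def by (simp add: sum_distrib_left algebra_simps)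

lemma vtensor3_scale:
  "vtensor3 (a *s u) v w = a *s vtensor3 u v w"
  "vtensor3 u (a *s v) w = a *s vtensor3 u v w"
  "vtensor3 u v (a *s w) = a *s vtensor3 u v w"
  unfolding vtensor3_def by (simp_all add: vec_eq_iff algebra_simps)

definition ghz_plus :: complex where "ghz_plus = (1 - \<i>) / 2"

definition ghz_minus :: complex where "ghz_minus = (1 + \<i>) / 2"

text \<open>In the eigenbasis of Pauli Y the ring graph state is of GHZ type.\<close>
lemma ring_vec_ghz:
  "ring_vec = ghz_plus *s vtensor3 y_plus y_plus y_plus + ghz_minus *s vtensor3 y_minus y_minus y_minus"
  unfolding ring_vec_def ghz_plus_def ghz_minus_def vtensor3_def y_plus_def y_minus_def
  by (simp add: vec8_eq_iff field_simps)

lemma ring_vec_flip_ghz: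
  "ring_vec_flip = ghz_minus *s vtensor3 y_plus y_plus y_plus + ghz_plus *s vtensor3 y_minus y_minus y_minus"
  unfolding ring_vec_flip_eq ghz_plus_def ghz_minus_def vtensor3_def y_plus_def y_minus_def
  by (simp add: vec8_eq_iff field_simps)

lemma homogeneous_2x2_unique:
  fixes x y p q u v :: complex
  assumes "x * p + y * u = 0" "x * q + y * v = 0" "p * v - q * u \<noteq> 0"
  shows "x = 0 \<and> y = 0"
proof -
  have "x * (p * v - q * u) = v * (x * p + y * u) - u * (x * q + y * v)"
    "y * (p * v - q * u) = p * (x * q + y * v) - q * (x * p + y * u)"
    by (simp_all add: algebra_simps)
  then show ?thesis
    using assms by simp
qed

text \<open>The entries of the k-th local factor in the Pauli-Y eigenbasis are pk, qk, uk, vk. The six mixed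
  coefficients of its image of a GHZ-type vector vanish only if all three factors are diagonal or
  all three are antidiagonal.\<close>
lemma ghz_mixed_coeffs_vanish:
  fixes p1 q1 u1 v1 p2 q2 u2 v2 p3 q3 u3 v3 \<alpha> \<beta> :: complex
  assumes ab: "\<alpha> \<noteq> 0" "\<beta> \<noteq> 0"
    and det: "p1 * v1 - q1 * u1 \<noteq> 0" "p2 * v2 - q2 * u2 \<noteq> 0" "p3 * v3 - q3 * u3 \<noteq> 0"
    and E001: "\<alpha> * p1 * p2 * q3 + \<beta> * u1 * u2 * v3 = 0"
    and E010: "\<alpha> * p1 * q2 * p3 + \<beta> * u1 * v2 * u3 = 0"
    and E011: "\<alpha> * p1 * q2 * q3 + \<beta> * u1 * v2 * v3 = 0"
    and E100: "\<alpha> * q1 * p2 * p3 + \<beta> * v1 * u2 * u3 = 0"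
    and E101: "\<alpha> * q1 * p2 * q3 + \<beta> * v1 * u2 * v3 = 0"
    and E110: "\<alpha> * q1 * q2 * p3 + \<beta> * v1 * v2 * u3 = 0"
  shows "(q1 = 0 \<and> q2 = 0 \<and> q3 = 0 \<and> u1 = 0 \<and> u2 = 0 \<and> u3 = 0)
       \<or> (p1 = 0 \<and> p2 = 0 \<and> p3 = 0 \<and> v1 = 0 \<and> v2 = 0 \<and> v3 = 0)"
proof -
  have "\<alpha> * p1 * q2 = 0 \<and> \<beta> * u1 * v2 = 0"
    by (rule homogeneous_2x2_unique[OF _ _ det(3)]) (use E010 E011 in \<open>simp_all add: algebra_simps\<close>)
  moreover have "\<alpha> * q1 * p2 = 0 \<and> \<beta> * v1 * u2 = 0"
    by (rule homogeneous_2x2_unique[OF _ _ det(3)]) (use E100 E101 in \<open>simp_all add: algebra_simps\<close>)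
  moreover have "\<alpha> * p1 * q3 = 0 \<and> \<beta> * u1 * v3 = 0"
    by (rule homogeneous_2x2_unique[OF _ _ det(2)]) (use E001 E011 in \<open>simp_all add: algebra_simps\<close>)
  moreover have "\<alpha> * q1 * p3 = 0 \<and> \<beta> * v1 * u3 = 0"
    by (rule homogeneous_2x2_unique[OF _ _ det(2)]) (use E100 E110 in \<open>simp_all add: algebra_simps\<close>)
  moreover have "\<alpha> * p2 * q3 = 0 \<and> \<beta> * u2 * v3 = 0"
    by (rule homogeneous_2x2_unique[OF _ _ det(1)]) (use E001 E101 in \<open>simp_all add: algebra_simps\<close>)
  moreover have "\<alpha> * q2 * p3 = 0 \<and> \<beta> * v2 * u3 = 0"
    by (rule homogeneous_2x2_unique[OF _ _ det(1)]) (use E010 E110 in \<open>simp_all add: algebra_simps\<close>)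
  ultimately show ?thesis
    using ab det by (cases "p1 = 0") auto
qed

lemma tensor3_mult_ghz_coeff:
  "dot8 r1 r2 r3 (tensor3 G1 G2 G3 *v (x *s vtensor3 u u u + y *s vtensor3 w w w))
     = x * (dot2 r1 (G1 *v u) * dot2 r2 (G2 *v u) * dot2 r3 (G3 *v u))
     + y * (dot2 r1 (G1 *v w) * dot2 r2 (G2 *v w) * dot2 r3 (G3 *v w))"
  by (simp add: matrix_vector_right_distrib vector_scalar_commute tensor3_mult_vtensor3
      dot8_add dot8_scale dot8_vtensor3)

lemma ring_vec_symmetry_coeff_eqs:
  assumes G1: "G1 *v y_plus = p1 *s y_plus + q1 *s y_minus" "G1 *v y_minus = u1 *s y_plus + v1 *s y_minus"
    and G2: "G2 *v y_plus = p2 *s y_plus + q2 *s y_minus" "G2 *v y_minus = u2 *s y_plus + v2 *s y_minus"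
    and G3: "G3 *v y_plus = p3 *s y_plus + q3 *s y_minus" "G3 *v y_minus = u3 *s y_plus + v3 *s y_minus"
    and sym: "tensor3 G1 G2 G3 *v ring_vec = c *s ring_vec"
  shows "ghz_plus * p1 * p2 * p3 + ghz_minus * u1 * u2 * u3 = c * ghz_plus"
    and "ghz_plus * q1 * q2 * q3 + ghz_minus * v1 * v2 * v3 = c * ghz_minus"
    and "ghz_plus * p1 * p2 * q3 + ghz_minus * u1 * u2 * v3 = 0"
    and "ghz_plus * p1 * q2 * p3 + ghz_minus * u1 * v2 * u3 = 0"
    and "ghz_plus * p1 * q2 * q3 + ghz_minus * u1 * v2 * v3 = 0"
    and "ghz_plus * q1 * p2 * p3 + ghz_minus * v1 * u2 * u3 = 0"
    and "ghz_plus * q1 * p2 * q3 + ghz_minus * v1 * u2 * v3 = 0"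
    and "ghz_plus * q1 * q2 * p3 + ghz_minus * v1 * v2 * u3 = 0"
proof -
  let ?e = y_plus and ?f = y_minus and ?e' = y_plus_dual and ?f' = y_minus_dual
  have coeff: "ghz_plus * (dot2 r1 (G1 *v ?e) * dot2 r2 (G2 *v ?e) * dot2 r3 (G3 *v ?e))
      + ghz_minus * (dot2 r1 (G1 *v ?f) * dot2 r2 (G2 *v ?f) * dot2 r3 (G3 *v ?f))
    = c * (ghz_plus * (dot2 r1 ?e * dot2 r2 ?e * dot2 r3 ?e) + ghz_minus * (dot2 r1 ?f * dot2 r2 ?f * dot2 r3 ?f))"
    for r1 r2 r3
    using arg_cong[OF sym, of "dot8 r1 r2 r3"]
    unfolding ring_vec_ghz tensor3_mult_ghz_coeff by (simp add: dot8_add dot8_scale dot8_vtensor3 distrib_left)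
  note coeff_simps = G1 G2 G3 dot2_lincomb mult.assoc
  show "ghz_plus * p1 * p2 * p3 + ghz_minus * u1 * u2 * u3 = c * ghz_plus"
    using coeff[of ?e' ?e' ?e'] by (simp add: coeff_simps)
  show "ghz_plus * q1 * q2 * q3 + ghz_minus * v1 * v2 * v3 = c * ghz_minus"
    using coeff[of ?f' ?f' ?f'] by (simp add: coeff_simps)
  show "ghz_plus * p1 * p2 * q3 + ghz_minus * u1 * u2 * v3 = 0"
    using coeff[of ?e' ?e' ?f'] by (simp add: coeff_simps)
  show "ghz_plus * p1 * q2 * p3 + ghz_minus * u1 * v2 * u3 = 0"
    using coeff[of ?e' ?f' ?e'] by (simp add: coeff_simps)
  show "ghz_plus * p1 * q2 * q3 + ghz_minus * u1 * v2 * v3 = 0"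
    using coeff[of ?e' ?f' ?f'] by (simp add: coeff_simps)
  show "ghz_plus * q1 * p2 * p3 + ghz_minus * v1 * u2 * u3 = 0"
    using coeff[of ?f' ?e' ?e'] by (simp add: coeff_simps)
  show "ghz_plus * q1 * p2 * q3 + ghz_minus * v1 * u2 * v3 = 0"
    using coeff[of ?f' ?e' ?f'] by (simp add: coeff_simps)
  show "ghz_plus * q1 * q2 * p3 + ghz_minus * v1 * v2 * u3 = 0"
    using coeff[of ?f' ?f' ?e'] by (simp add: coeff_simps)
qed

text \<open>Local invertible symmetries of a GHZ-type vector are diagonal or antidiagonal in the product
  basis, so they also stabilise the vector with the two coefficients swapped, up to sign.\<close>
lemma ring_vec_flip_local_symmetry:
  assumes inv: "invertible G1" "invertible G2" "invertible G3"
    and sym: "tensor3 G1 G2 G3 *v ring_vec = c *s ring_vec"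
  shows "tensor3 G1 G2 G3 *v ring_vec_flip = c *s ring_vec_flip
       \<or> tensor3 G1 G2 G3 *v ring_vec_flip = (-c) *s ring_vec_flip"
proof -
  let ?e = y_plus and ?f = y_minus and ?\<alpha> = ghz_plus and ?\<beta> = ghz_minus
  obtain p1 q1 u1 v1 where G1: "G1 *v ?e = p1 *s ?e + q1 *s ?f" "G1 *v ?f = u1 *s ?e + v1 *s ?f"
    and det1: "p1 * v1 - q1 * u1 \<noteq> 0"
    using invertible_y_basis_coeffs[OF inv(1)] .
  obtain p2 q2 u2 v2 where G2: "G2 *v ?e = p2 *s ?e + q2 *s ?f" "G2 *v ?f = u2 *s ?e + v2 *s ?f"
    and det2: "p2 * v2 - q2 * u2 \<noteq> 0"
    using invertible_y_basis_coeffs[OF inv(2)] .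
  obtain p3 q3 u3 v3 where G3: "G3 *v ?e = p3 *s ?e + q3 *s ?f" "G3 *v ?f = u3 *s ?e + v3 *s ?f"
    and det3: "p3 * v3 - q3 * u3 \<noteq> 0"
    using invertible_y_basis_coeffs[OF inv(3)] .
  note E = ring_vec_symmetry_coeff_eqs[OF G1 G2 G3 sym]
  have ab: "?\<alpha> \<noteq> 0" "?\<beta> \<noteq> 0"
    unfolding ghz_plus_def ghz_minus_def by (simp_all add: complex_eq_iff)
  have T: "tensor3 G1 G2 G3 *v ring_vec_flip = ?\<beta> *s vtensor3 (G1 *v ?e) (G2 *v ?e) (G3 *v ?e)
      + ?\<alpha> *s vtensor3 (G1 *v ?f) (G2 *v ?f) (G3 *v ?f)"
    unfolding ring_vec_flip_ghz by (simp add: matrix_vector_right_distrib vector_scalar_commute tensor3_mult_vtensor3)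
  from ghz_mixed_coeffs_vanish[OF ab det1 det2 det3 E(3-8)]
  show ?thesis
  proof
    assume "q1 = 0 \<and> q2 = 0 \<and> q3 = 0 \<and> u1 = 0 \<and> u2 = 0 \<and> u3 = 0"
    moreover from this have "p1 * p2 * p3 = c" "v1 * v2 * v3 = c"
      using E(1,2) ab by (simp_all add: mult.assoc)
    ultimately have "tensor3 G1 G2 G3 *v ring_vec_flip = c *s ring_vec_flip"
      unfolding T unfolding G1 G2 G3 ring_vec_flip_ghz
      by (simp add: vtensor3_scale mult_ac)
    then show ?thesis ..
  next
    assume z: "p1 = 0 \<and> p2 = 0 \<and> p3 = 0 \<and> v1 = 0 \<and> v2 = 0 \<and> v3 = 0"
    have "?\<alpha> * ?\<alpha> = - (?\<beta> * ?\<beta>)"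
      unfolding ghz_plus_def ghz_minus_def by (simp add: field_simps)
    moreover have "?\<beta> * (u1 * u2 * u3) = c * ?\<alpha>" "?\<alpha> * (q1 * q2 * q3) = c * ?\<beta>"
      using E(1,2) z by (simp_all add: mult.assoc)
    ultimately have "?\<beta> * (?\<alpha> * (u1 * u2 * u3)) = ?\<beta> * (- c * ?\<beta>)"
      "?\<alpha> * (?\<beta> * (q1 * q2 * q3)) = ?\<alpha> * (- c * ?\<alpha>)"
      by algebra+
    then have "?\<alpha> * (u1 * u2 * u3) = - c * ?\<beta>" "?\<beta> * (q1 * q2 * q3) = - c * ?\<alpha>"
      unfolding mult_left_cancel[OF ab(1)] mult_left_cancel[OF ab(2)] .
    with z have "tensor3 G1 G2 G3 *v ring_vec_flip = (-c) *s ring_vec_flip"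
      unfolding T unfolding G1 G2 G3 ring_vec_flip_ghz
      by (simp add: vtensor3_scale mult_ac)
    then show ?thesis ..
  qed
qed

section \<open>No SEP1 transformation\<close>

text \<open>K = H G for an invertible local symmetry G of the ring state; by the flip lemma, K and H then
  shrink the flipped state by the same factor as the ring state.\<close>
lemma kraus_norm_ratio_ring_vec:
  fixes h1 h2 h3 A B C :: mat2
  defines "H \<equiv> tensor3 h1 h2 h3" and "K \<equiv> tensor3 A B C"
  assumes h: "invertible h1" "invertible h2" "invertible h3"
    and ABC: "invertible A" "invertible B" "invertible C"
    and parallel: "K *v ring_vec = k *s (H *v ring_vec)"
  shows "cinner (K *v ring_vec_flip) (K *v ring_vec_flip) * cinner (H *v ring_vec) (H *v ring_vec)
       = cinner (K *v ring_vec) (K *v ring_vec) * cinner (H *v ring_vec_flip) (H *v ring_vec_flip)"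
proof -
  obtain N1 N2 N3 where N: "h1 ** N1 = mat 1" "N1 ** h1 = mat 1" "h2 ** N2 = mat 1" "N2 ** h2 = mat 1"
    "h3 ** N3 = mat 1" "N3 ** h3 = mat 1"
    using h unfolding invertible_def by blast
  define G where "G = tensor3 (N1 ** A) (N2 ** B) (N3 ** C)"
  have NH: "tensor3 N1 N2 N3 ** H = mat 1"
    unfolding H_def tensor3_mult N tensor3_mat_1 ..
  have K: "K = H ** G"
    unfolding H_def K_def G_def tensor3_mult by (simp add: matrix_mul_assoc N)
  have "invertible N1" "invertible N2" "invertible N3"
    using N unfolding invertible_def by blast+
  then have G_inv: "invertible (N1 ** A)" "invertible (N2 ** B)" "invertible (N3 ** C)"
    using ABC by (simp_all add: invertible_mult)
  have "G *v ring_vec = tensor3 N1 N2 N3 *v (K *v ring_vec)"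
    by (simp add: K matrix_vector_mul_assoc matrix_mul_assoc NH)
  also have "\<dots> = k *s ring_vec"
    by (simp add: parallel vector_scalar_commute matrix_vector_mul_assoc NH)
  finally have "G *v ring_vec_flip = k *s ring_vec_flip \<or> G *v ring_vec_flip = (- k) *s ring_vec_flip"
    using ring_vec_flip_local_symmetry[OF G_inv] unfolding G_def by blast
  then obtain c where "G *v ring_vec_flip = c *s ring_vec_flip" "cnj c * c = cnj k * k"
    by (metis complex_cnj_minus minus_mult_minus)
  then have "cinner (K *v ring_vec_flip) (K *v ring_vec_flip) = cnj k * k * cinner (H *v ring_vec_flip) (H *v ring_vec_flip)"
    unfolding K by (simp add: matrix_vector_mul_assoc[symmetric] vector_scalar_commute cinner_smult_self)
  then show ?thesis
    by (simp add: parallel cinner_smult_self)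
qed

lemma no_SEP1_transform:
  fixes a :: real and \<psi> :: vec8 and h1 h2 h3 :: mat2
  defines "H \<equiv> tensor3 h1 h2 h3"
  assumes a: "0 < a" "a < 1/2"
    and psi_norm: "norm \<psi> = 1"
    and psi_stab: "\<forall>i\<in>{1,2,3}. stabA i *v \<psi> = \<psi>"
    and herm: "hermitian h1" "hermitian h2" "hermitian h3"
    and sq: "h1 ** h1 = (1/2) *\<^sub>R mat 1 + a *\<^sub>R pauliZ" "h2 ** h2 = (1/2) *\<^sub>R mat 1 + a *\<^sub>R pauliX"
      "h3 ** h3 = (1/2) *\<^sub>R mat 1 + a *\<^sub>R pauliZ"
  shows "\<not> (\<exists>\<Lambda>. SEP1 \<Lambda> \<and> transforms \<Lambda> \<psi> (inverse (norm (H *v \<psi>)) *\<^sub>R (H *v \<psi>)))"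
proof
  assume "\<exists>\<Lambda>. SEP1 \<Lambda> \<and> transforms \<Lambda> \<psi> (inverse (norm (H *v \<psi>)) *\<^sub>R (H *v \<psi>))"
  then obtain Ks where complete: "kraus_complete Ks"
    and inv: "\<forall>(A, B, C) \<in> set Ks. invertible A \<and> invertible B \<and> invertible C"
    and out: "kraus_map Ks (proj \<psi>) = proj (inverse (norm (H *v \<psi>)) *\<^sub>R (H *v \<psi>))"
    unfolding SEP1_def transforms_def by blast
  have "\<bar>a\<bar> < 1/2"
    using a by simp
  then have h_inv: "invertible h1" "invertible h2" "invertible h3"
    using sq invertible_sqrt_half_id_plus_involution pauliX_squared pauliZ_squared by blast+
  have gram: "dagger H ** H = filter_gram a"
    unfolding H_def using herm sq by (rule dagger_filter_mult_self)
  obtain x0 where \<psi>: "\<psi> = x0 *s ring_vec"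
    using stabilised_eq_ring_vec[OF psi_stab] by blast
  have "\<psi> \<noteq> 0"
    using psi_norm by auto
  then have "x0 \<noteq> 0"
    using \<psi> by auto
  obtain H' where "H' ** H = mat 1"
    using invertible_tensor3[OF h_inv] invertible_left_inverse unfolding H_def by blast
  then have "H *v \<psi> \<noteq> 0"
    using \<open>\<psi> \<noteq> 0\<close> by (metis matrix_vector_mul_assoc matrix_vector_mul_lid matrix_vector_mult_0_right)
  have "cinner ring_vec_flip ring_vec_flip * cinner (H *v ring_vec) (H *v ring_vec)
      = cinner ring_vec ring_vec * cinner (H *v ring_vec_flip) (H *v ring_vec_flip)"
  proof (rule kraus_complete_norm_ratio[OF complete])
    fix A B C
    assume mem: "(A, B, C) \<in> set Ks"
    obtain c where "tensor3 A B C *v \<psi> = c *s (H *v \<psi>)"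
      using kraus_output_parallel[OF out \<open>H *v \<psi> \<noteq> 0\<close> mem] by blast
    then have "tensor3 A B C *v ring_vec = c *s (H *v ring_vec)"
      using \<open>x0 \<noteq> 0\<close> unfolding \<psi> by (simp add: vector_scalar_commute vec_eq_iff)
    then show "cinner (tensor3 A B C *v ring_vec_flip) (tensor3 A B C *v ring_vec_flip) * cinner (H *v ring_vec) (H *v ring_vec)
      = cinner (tensor3 A B C *v ring_vec) (tensor3 A B C *v ring_vec) * cinner (H *v ring_vec_flip) (H *v ring_vec_flip)"
      using kraus_norm_ratio_ring_vec h_inv inv mem unfolding H_def by fastforce
  qed
  moreover have "cinner (H *v v) (H *v v) = cinner v (filter_gram a *v v)" for v
    unfolding gram[symmetric] cinner_dagger_mult_self ..
  ultimately have "8 * (1 + 8 * of_real a ^ 3) = 8 * (1 - 8 * of_real a ^ 3 :: complex)"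
    by (simp only: cinner_ring_vec_self cinner_ring_vec_filter_gram cinner_ring_vec_flip_filter_gram)
  then show False
    using a by (simp add: complex_eq_iff)
qed

section \<open>An explicit SEP transformation\<close>

definition pauliY :: mat2 where
  "pauliY = mk_mat2 0 (-\<i>) \<i> 0"

lemma i_mult_i: "\<i> * x * \<i> = - x"
  by (metis complex_i_mult_minus mult.commute)

text \<open>The identity and the products A1 A2, A2 A3, A1 A3 of the stabilisers.\<close>
definition ring_stabilisers :: "(mat2 \<times> mat2 \<times> mat2) list" where
  "ring_stabilisers = [(mat 1, mat 1, mat 1), (pauliY, pauliY, mat 1), (mat 1, pauliY, pauliY), (pauliY, mat 1, pauliY)]"

text \<open>Product projectors summing to the projector onto the -1 eigenspace of stabA 2 = Z X Z.\<close>
definition ring_annihilators :: "(mat2 \<times> mat2 \<times> mat2) list" where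
  "ring_annihilators =
    (let P0 = mk_mat2 1 0 0 0; P1 = mk_mat2 0 0 0 1;
         Pp = mk_mat2 (1/2) (1/2) (1/2) (1/2); Pm = mk_mat2 (1/2) (-1/2) (-1/2) (1/2)
     in [(P0, Pm, P0), (P1, Pp, P0), (P0, Pp, P1), (P1, Pm, P1)])"

lemma ring_stabilisers_fix_ring_vec: "(S1, S2, S3) \<in> set ring_stabilisers \<Longrightarrow> tensor3 S1 S2 S3 *v ring_vec = ring_vec"
  unfolding ring_stabilisers_def ring_vec_def pauliY_def mat_1_eq_mk_mat2
  by (auto simp: tensor3_mult_mk_vec8 vec8_eq_iff)

lemma ring_annihilators_kill_ring_vec: "(P, Q, R) \<in> set ring_annihilators \<Longrightarrow> tensor3 P Q R *v ring_vec = 0"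
  unfolding ring_annihilators_def ring_vec_def Let_def
  by (auto simp: tensor3_mult_mk_vec8 vec8_eq_iff)

lemma sum_ring_stabilisers_conj_filter_gram:
  "sum_list (map (\<lambda>(S1, S2, S3). dagger (tensor3 S1 S2 S3) ** filter_gram a ** tensor3 S1 S2 S3) ring_stabilisers)
     = (1/2) *\<^sub>R mat 1 + (4 * a ^ 3) *\<^sub>R stabA 2"
proof -
  let ?Z = "mk_mat2 (1/2 + of_real a) 0 0 (1/2 - of_real a)" and ?Z' = "mk_mat2 (1/2 - of_real a) 0 0 (1/2 + of_real a)"
    and ?X = "mk_mat2 (1/2) (of_real a) (of_real a) (1/2)" and ?X' = "mk_mat2 (1/2) (- of_real a) (- of_real a) (1/2)"
  have "dagger pauliY ** ?Z ** pauliY = ?Z'" "dagger pauliY ** ?X ** pauliY = ?X'"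
    by (simp_all add: pauliY_def dagger_mk_mat2 mk_mat2_mult mat2_eq_iff i_mult_i)
  then have "sum_list (map (\<lambda>(S1, S2, S3). dagger (tensor3 S1 S2 S3) ** filter_gram a ** tensor3 S1 S2 S3) ring_stabilisers)
      = tensor3 ?Z ?X ?Z + tensor3 ?Z' ?X' ?Z + tensor3 ?Z ?X' ?Z' + tensor3 ?Z' ?X ?Z'"
    unfolding ring_stabilisers_def filter_gram_def half_id_plus_pauliZ half_id_plus_pauliX
    by (simp add: dagger_tensor3 tensor3_mult dagger_mat_1 add.assoc)
  also have "\<dots> = (1/2) *\<^sub>R mat 1 + (4 * a ^ 3) *\<^sub>R stabA 2"
    unfolding stabA_eq_tensor3 pauliX_eq_mk_mat2 pauliZ_eq_mk_mat2
    by (simp add: mat8_eq_iff all_bool_eq tensor3_nth mat_def)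
      (simp add: scaleR_conv_of_real field_simps power3_eq_cube)
  finally show ?thesis .
qed

lemma sum_ring_annihilators_gram:
  "sum_list (map (\<lambda>(P, Q, R). dagger (tensor3 P Q R) ** tensor3 P Q R) ring_annihilators)
     = (1/2) *\<^sub>R (mat 1 - stabA 2)"
  unfolding ring_annihilators_def stabA_eq_tensor3 Let_def
  by (simp add: dagger_tensor3 tensor3_mult pauliX_eq_mk_mat2 pauliZ_eq_mk_mat2 dagger_mk_mat2 mk_mat2_mult
      mat8_eq_iff all_bool_eq tensor3_nth mat_def)
    (simp add: scaleR_conv_of_real)

definition ring_kraus :: "mat2 \<Rightarrow> mat2 \<Rightarrow> mat2 \<Rightarrow> real \<Rightarrow> real \<Rightarrow> (mat2 \<times> mat2 \<times> mat2) list" where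
  "ring_kraus h1 h2 h3 k l =
     map (\<lambda>(S1, S2, S3). (k *\<^sub>R (h1 ** S1), h2 ** S2, h3 ** S3)) ring_stabilisers
     @ map (\<lambda>(P, Q, R). (l *\<^sub>R P, Q, R)) ring_annihilators"

lemma tensor3_filter_mult:
  "tensor3 (k *\<^sub>R (h1 ** S1)) (h2 ** S2) (h3 ** S3) = k *\<^sub>R (tensor3 h1 h2 h3 ** tensor3 S1 S2 S3)"
  by (simp add: tensor3_scaleR_left tensor3_mult)

lemma ring_kraus_complete:
  assumes herm: "hermitian h1" "hermitian h2" "hermitian h3"
    and sq: "h1 ** h1 = (1/2) *\<^sub>R mat 1 + a *\<^sub>R pauliZ" "h2 ** h2 = (1/2) *\<^sub>R mat 1 + a *\<^sub>R pauliX"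
      "h3 ** h3 = (1/2) *\<^sub>R mat 1 + a *\<^sub>R pauliZ"
    and k: "k\<^sup>2 * (1 + 8 * a ^ 3) = 2" and l: "l\<^sup>2 = 8 * a ^ 3 * k\<^sup>2"
  shows "kraus_complete (ring_kraus h1 h2 h3 k l)"
proof -
  have "dagger (tensor3 h1 h2 h3) ** tensor3 h1 h2 h3 = filter_gram a"
    using herm sq by (rule dagger_filter_mult_self)
  then have gram: "dagger (tensor3 h1 h2 h3) ** (tensor3 h1 h2 h3 ** X) = filter_gram a ** X" for X :: mat8
    by (simp add: matrix_mul_assoc)
  have "dagger (tensor3 (k *\<^sub>R (h1 ** S1)) (h2 ** S2) (h3 ** S3)) ** tensor3 (k *\<^sub>R (h1 ** S1)) (h2 ** S2) (h3 ** S3)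
      = k\<^sup>2 *\<^sub>R (dagger (tensor3 S1 S2 S3) ** filter_gram a ** tensor3 S1 S2 S3)" for S1 S2 S3
    unfolding tensor3_filter_mult gram_scaleR by (simp add: dagger_mult matrix_mul_assoc[symmetric] gram)
  moreover have "dagger (tensor3 (l *\<^sub>R P) Q R) ** tensor3 (l *\<^sub>R P) Q R = l\<^sup>2 *\<^sub>R (dagger (tensor3 P Q R) ** tensor3 P Q R)"
    for P Q R
    unfolding tensor3_scaleR_left gram_scaleR ..
  ultimately have "sum_list (map (\<lambda>(A, B, C). dagger (tensor3 A B C) ** tensor3 A B C) (ring_kraus h1 h2 h3 k l))
      = k\<^sup>2 *\<^sub>R ((1/2) *\<^sub>R mat 1 + (4 * a ^ 3) *\<^sub>R stabA 2) + l\<^sup>2 *\<^sub>R ((1/2) *\<^sub>R (mat 1 - stabA 2))"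
    unfolding ring_kraus_def sum_ring_stabilisers_conj_filter_gram[symmetric, of a] sum_ring_annihilators_gram[symmetric]
    by (simp add: split_def comp_def sum_list_map_scaleR)
  also have "\<dots> = (k\<^sup>2 / 2 + l\<^sup>2 / 2) *\<^sub>R mat 1 + (k\<^sup>2 * (4 * a ^ 3) - l\<^sup>2 / 2) *\<^sub>R stabA 2"
    by (simp add: algebra_simps)
  also have "\<dots> = mat 1"
  proof -
    have "k\<^sup>2 / 2 + l\<^sup>2 / 2 = 1" "k\<^sup>2 * (4 * a ^ 3) - l\<^sup>2 / 2 = 0"
      using k l by (simp_all add: algebra_simps)
    then show ?thesis
      by simp
  qed
  finally show ?thesis
    unfolding kraus_complete_def .
qed

lemma ring_kraus_output:
  assumes "\<psi> = x0 *s ring_vec"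
  shows "kraus_map (ring_kraus h1 h2 h3 k l) (proj \<psi>) = proj ((2 * k) *\<^sub>R (tensor3 h1 h2 h3 *v \<psi>))"
proof -
  have stab: "tensor3 (k *\<^sub>R (h1 ** S1)) (h2 ** S2) (h3 ** S3) *v \<psi> = k *\<^sub>R (tensor3 h1 h2 h3 *v \<psi>)"
    if "(S1, S2, S3) \<in> set ring_stabilisers" for S1 S2 S3
    using ring_stabilisers_fix_ring_vec[OF that] assms
    by (simp add: tensor3_filter_mult scaleR_matrix_vector_mult matrix_vector_mul_assoc[symmetric]
        vector_scalar_commute scaleR_smult_commute)
  have ann: "tensor3 (l *\<^sub>R P) Q R *v \<psi> = 0" if "(P, Q, R) \<in> set ring_annihilators" for P Q R
    using ring_annihilators_kill_ring_vec[OF that] assms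
    by (simp add: tensor3_scaleR_left scaleR_matrix_vector_mult vector_scalar_commute)
  have kraus_vecs: "map (\<lambda>(A, B, C). tensor3 A B C *v \<psi>) (ring_kraus h1 h2 h3 k l)
      = map (\<lambda>_. k *\<^sub>R (tensor3 h1 h2 h3 *v \<psi>)) ring_stabilisers @ map (\<lambda>_. 0) ring_annihilators"
    unfolding ring_kraus_def using stab ann by auto
  have "kraus_map (ring_kraus h1 h2 h3 k l) (proj \<psi>)
      = (k\<^sup>2 + (k\<^sup>2 + (k\<^sup>2 + k\<^sup>2))) *\<^sub>R proj (tensor3 h1 h2 h3 *v \<psi>)"
    unfolding kraus_map_proj kraus_vecs ring_stabilisers_def ring_annihilators_def Let_def
    by (simp only: list.map map_append sum_list_append sum_list_simps proj_zero proj_scaleR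
        scaleR_add_left add_0_right add_0_left)
  also have "k\<^sup>2 + (k\<^sup>2 + (k\<^sup>2 + k\<^sup>2)) = (2 * k)\<^sup>2"
    by (simp add: power2_eq_square)
  finally show ?thesis
    by (simp only: proj_scaleR)
qed

lemma SEP_transform:
  fixes a :: real and \<psi> :: vec8 and h1 h2 h3 :: mat2
  defines "H \<equiv> tensor3 h1 h2 h3"
  assumes a: "0 \<le> a"
    and psi_norm: "norm \<psi> = 1"
    and psi_stab: "\<forall>i\<in>{1,2,3}. stabA i *v \<psi> = \<psi>"
    and herm: "hermitian h1" "hermitian h2" "hermitian h3"
    and sq: "h1 ** h1 = (1/2) *\<^sub>R mat 1 + a *\<^sub>R pauliZ" "h2 ** h2 = (1/2) *\<^sub>R mat 1 + a *\<^sub>R pauliX"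
      "h3 ** h3 = (1/2) *\<^sub>R mat 1 + a *\<^sub>R pauliZ"
  shows "\<exists>\<Lambda>. SEP \<Lambda> \<and> transforms \<Lambda> \<psi> (inverse (norm (H *v \<psi>)) *\<^sub>R (H *v \<psi>))"
proof -
  define n where "n = norm (H *v \<psi>)"
  define k where "k = inverse (2 * n)"
  define l where "l = sqrt (8 * a ^ 3) * k"
  obtain x0 where \<psi>: "\<psi> = x0 *s ring_vec"
    using stabilised_eq_ring_vec[OF psi_stab] by blast
  have x0: "cnj x0 * x0 * 8 = 1"
    using psi_norm cinner_self[of \<psi>] unfolding \<psi> cinner_smult_self cinner_ring_vec_self by simp
  have "dagger H ** H = filter_gram a"
    unfolding H_def using herm sq by (rule dagger_filter_mult_self)
  then have "of_real (n\<^sup>2) * 8 = (cnj x0 * x0 * 8) * (1 + 8 * of_real a ^ 3)"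
    unfolding n_def cinner_self[symmetric] cinner_dagger_mult_self[symmetric]
    by (simp add: \<psi> vector_scalar_commute cinner_scale_left cinner_scale_right cinner_ring_vec_filter_gram mult_ac)
  then have "of_real (n\<^sup>2) * 8 = (1 + 8 * of_real a ^ 3 :: complex)"
    unfolding x0 by simp
  then have "complex_of_real (n\<^sup>2 * 8) = complex_of_real (1 + 8 * a ^ 3)"
    by simp
  then have n2: "n\<^sup>2 * 8 = 1 + 8 * a ^ 3"
    by (simp only: of_real_eq_iff)
  moreover have "n \<noteq> 0"
    using n2 a by (auto simp: add_nonneg_eq_0_iff)
  ultimately have "k\<^sup>2 * (1 + 8 * a ^ 3) = 2"
    unfolding k_def n2[symmetric] by (simp add: field_simps)
  moreover have "l\<^sup>2 = 8 * a ^ 3 * k\<^sup>2"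
    unfolding l_def using a by (simp add: power_mult_distrib)
  ultimately have "kraus_complete (ring_kraus h1 h2 h3 k l)"
    using ring_kraus_complete herm sq by blast
  moreover have "kraus_map (ring_kraus h1 h2 h3 k l) (proj \<psi>) = proj (inverse n *\<^sub>R (H *v \<psi>))"
    using ring_kraus_output[OF \<psi>] unfolding H_def k_def by simp
  ultimately show ?thesis
    unfolding SEP_def transforms_def n_def by blast
qed

theorem mainTheorem5:
  fixes a :: real and \<psi> :: vec8 and h1 h2 h3 :: mat2
  assumes a: "0 < a" "a < 1/2"
    and psi_norm: "norm \<psi> = 1"
    and psi_stab: "\<forall>i\<in>{1,2,3}. stabA i *v \<psi> = \<psi>"
    and h1: "psd h1" "h1 ** h1 = (1/2) *\<^sub>R mat 1 + a *\<^sub>R pauliZ"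
    and h2: "psd h2" "h2 ** h2 = (1/2) *\<^sub>R mat 1 + a *\<^sub>R pauliX"
    and h3: "psd h3" "h3 ** h3 = (1/2) *\<^sub>R mat 1 + a *\<^sub>R pauliZ"
  shows "(\<exists>\<Lambda>. SEP \<Lambda> \<and> transforms \<Lambda> \<psi>
            (inverse (norm (tensor3 h1 h2 h3 *v \<psi>)) *\<^sub>R (tensor3 h1 h2 h3 *v \<psi>)))
       \<and> \<not> (\<exists>\<Lambda>. SEP1 \<Lambda> \<and> transforms \<Lambda> \<psi>
            (inverse (norm (tensor3 h1 h2 h3 *v \<psi>)) *\<^sub>R (tensor3 h1 h2 h3 *v \<psi>)))"
proof -
  have herm: "hermitian h1" "hermitian h2" "hermitian h3"
    using h1(1) h2(1) h3(1) unfolding psd_def by blast+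
  show ?thesis
    using SEP_transform[OF _ psi_norm psi_stab herm h1(2) h2(2) h3(2)]
      no_SEP1_transform[OF a psi_norm psi_stab herm h1(2) h2(2) h3(2)] a(1)
    by simp
qed

end
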